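(* For every $\mu > 0$ there exists $n_0$ such that for every $n \geq n_0$ the following holds. Let $G$ be an $n$-vertex graph with minimum degree $\delta(G) \geq 7\mu n$ and independence number $\alpha(G) \leq 2$. Then either $G$ is $\mu$-inseparable, or there is a $\mu$-separation $\{U_1, U_2\}$ of $V(G)$ such that $G[U_1]$ and $G[U_2]$ are both $\mu$-inseparable.
   Context: For a graph $G$, a partition $\{U_1,U_2\}$ of $V(G)$ with $U_1, U_2$ nonempty is a $\mu$-separation if the number of edges of $G$ with one endpoint in $U_1$ and the other in $U_2$ is less than $\mu |U_1||U_2|$. A graph is $\mu$-inseparable if it has no $\mu$-separation. *)

theory Defs
  imports Complex_Main
begin

definition simple_graph :: "'a set \<Rightarrow> ('a \<Rightarrow> 'a \<Rightarrow> bool) \<Rightarrow> bool" where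
  "simple_graph V E \<longleftrightarrow> finite V \<and> (\<forall>u v. E u v \<longrightarrow> u \<in> V \<and> v \<in> V)
     \<and> (\<forall>u v. E u v \<longrightarrow> E v u) \<and> (\<forall>u. \<not> E u u)"

definition degree :: "'a set \<Rightarrow> ('a \<Rightarrow> 'a \<Rightarrow> bool) \<Rightarrow> 'a \<Rightarrow> nat" where
  "degree V E v = card {u \<in> V. E v u}"

definition independent_set :: "'a set \<Rightarrow> ('a \<Rightarrow> 'a \<Rightarrow> bool) \<Rightarrow> 'a set \<Rightarrow> bool" where
  "independent_set V E S \<longleftrightarrow> S \<subseteq> V \<and> (\<forall>u\<in>S. \<forall>v\<in>S. \<not> E u v)"

definition indep_number_le :: "'a set \<Rightarrow> ('a \<Rightarrow> 'a \<Rightarrow> bool) \<Rightarrow> nat \<Rightarrow> bool" where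
  "indep_number_le V E k \<longleftrightarrow> (\<forall>S. independent_set V E S \<longrightarrow> card S \<le> k)"

definition cross_edges :: "('a \<Rightarrow> 'a \<Rightarrow> bool) \<Rightarrow> 'a set \<Rightarrow> 'a set \<Rightarrow> nat" where
  "cross_edges E U1 U2 = card {(u, v). u \<in> U1 \<and> v \<in> U2 \<and> E u v}"

definition mu_separation :: "real \<Rightarrow> 'a set \<Rightarrow> ('a \<Rightarrow> 'a \<Rightarrow> bool) \<Rightarrow> 'a set \<Rightarrow> 'a set \<Rightarrow> bool" where
  "mu_separation \<mu> V E U1 U2 \<longleftrightarrow> U1 \<noteq> {} \<and> U2 \<noteq> {} \<and> U1 \<union> U2 = V \<and> U1 \<inter> U2 = {}
     \<and> real (cross_edges E U1 U2) < \<mu> * real (card U1) * real (card U2)"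

definition mu_inseparable :: "real \<Rightarrow> 'a set \<Rightarrow> ('a \<Rightarrow> 'a \<Rightarrow> bool) \<Rightarrow> bool" where
  "mu_inseparable \<mu> V E \<longleftrightarrow> \<not> (\<exists>U1 U2. mu_separation \<mu> V E U1 U2)"

definition induced :: "('a \<Rightarrow> 'a \<Rightarrow> bool) \<Rightarrow> 'a set \<Rightarrow> 'a \<Rightarrow> 'a \<Rightarrow> bool" where
  "induced E U = (\<lambda>u v. u \<in> U \<and> v \<in> U \<and> E u v)"

end

theory Submission
  imports Defs
begin

text \<open>Take a \<mu>-separation \<open>{U\<^sub>1, U\<^sub>2}\<close> with the fewest crossing edges. The minimum degree
  forces \<open>\<mu> < 1/7\<close> and both parts to have more than \<open>6\<mu>n\<close> vertices. If \<open>{A, B}\<close> were a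
  \<mu>-separation of \<open>G[U\<^sub>1]\<close>, then, say, \<open>e(A, U\<^sub>2) < \<mu>|A||U\<^sub>2|\<close>, so \<open>{A, B \<union> U\<^sub>2}\<close> is a
  \<mu>-separation of \<open>G\<close> and minimality gives \<open>e(B, U\<^sub>2) \<le> e(A, B) < \<mu>n|B|\<close>. On the other hand,
  averaging yields \<open>x \<in> A\<close> with fewer than \<open>2\<mu>|B|\<close> neighbours in \<open>B\<close> and fewer than
  \<open>2\<mu>|U\<^sub>2|\<close> in \<open>U\<^sub>2\<close>; since \<open>\<alpha>(G) \<le> 2\<close>, its non-neighbours in \<open>B\<close> and in \<open>U\<^sub>2\<close> are
  completely joined, so \<open>e(B, U\<^sub>2) \<ge> (1 - 2\<mu>)\<^sup>2|B||U\<^sub>2| > (25/49)6\<mu>n|B|\<close>, a contradiction.\<close>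

lemma degree_le_card: "finite Y \<Longrightarrow> degree Y E x \<le> card Y"
  unfolding degree_def by (simp add: card_mono)

lemma card_non_neighbours:
  assumes "finite Y"
  shows "card {y \<in> Y. \<not> E x y} = card Y - degree Y E x"
proof -
  have "Y = {y \<in> Y. \<not> E x y} \<union> {y \<in> Y. E x y}" by auto
  then have "card Y = card {y \<in> Y. \<not> E x y} + card {y \<in> Y. E x y}"
    using assms by (metis (no_types, lifting) card_Un_disjoint disjoint_iff finite_Un mem_Collect_eq)
  then show ?thesis unfolding degree_def by simp
qed

lemma degree_Un_disjoint:
  assumes "finite X" "finite Y" "X \<inter> Y = {}"
  shows "degree (X \<union> Y) E x = degree X E x + degree Y E x"
proof -
  have "{y \<in> X \<union> Y. E x y} = {y \<in> X. E x y} \<union> {y \<in> Y. E x y}" by auto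
  then show ?thesis
    unfolding degree_def using assms by (simp add: card_Un_disjoint disjoint_iff)
qed

lemma degree_lt_card:
  assumes "simple_graph V E" "v \<in> V"
  shows "degree V E v < card V"
proof -
  have "finite V" using assms(1) unfolding simple_graph_def by simp
  moreover have "{u \<in> V. E v u} \<subset> V"
    using assms unfolding simple_graph_def by auto
  ultimately show ?thesis unfolding degree_def by (simp add: psubset_card_mono)
qed

lemma min_degree_fraction_lt_1:
  fixes c :: real
  assumes "simple_graph V E" "V \<noteq> {}" "\<forall>v\<in>V. c * card V \<le> degree V E v"
  shows "c < 1"
proof -
  obtain v where "v \<in> V" using assms(2) by blast
  then have "c * card V \<le> degree V E v" "degree V E v < card V"
    using assms(3) degree_lt_card[OF assms(1)] by auto
  then have "c * card V < 1 * real (card V)" by linarith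
  then show ?thesis by (rule mult_right_less_imp_less) simp
qed

lemma cross_edges_eq_sum_degree:
  assumes "finite X" "finite Y"
  shows "cross_edges E X Y = (\<Sum>x\<in>X. degree Y E x)"
proof -
  have "{(u, v). u \<in> X \<and> v \<in> Y \<and> E u v} = Sigma X (\<lambda>x. {y \<in> Y. E x y})" by auto
  then show ?thesis
    unfolding cross_edges_def degree_def using assms by (simp add: card_SigmaI)
qed

lemma cross_edges_commute:
  assumes "\<forall>u v. E u v \<longrightarrow> E v u"
  shows "cross_edges E X Y = cross_edges E Y X"
proof -
  have "{(u, v). u \<in> Y \<and> v \<in> X \<and> E u v} = prod.swap ` {(u, v). u \<in> X \<and> v \<in> Y \<and> E u v}"
    using assms by auto
  then show ?thesis unfolding cross_edges_def by (simp add: card_image)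
qed

lemma cross_edges_Un_left:
  assumes "finite X\<^sub>1" "finite X\<^sub>2" "finite Y" "X\<^sub>1 \<inter> X\<^sub>2 = {}"
  shows "cross_edges E (X\<^sub>1 \<union> X\<^sub>2) Y = cross_edges E X\<^sub>1 Y + cross_edges E X\<^sub>2 Y"
  using assms by (simp add: cross_edges_eq_sum_degree sum.union_disjoint)

lemma cross_edges_Un_right:
  assumes "\<forall>u v. E u v \<longrightarrow> E v u"
    and "finite X" "finite Y\<^sub>1" "finite Y\<^sub>2" "Y\<^sub>1 \<inter> Y\<^sub>2 = {}"
  shows "cross_edges E X (Y\<^sub>1 \<union> Y\<^sub>2) = cross_edges E X Y\<^sub>1 + cross_edges E X Y\<^sub>2"
  using assms cross_edges_Un_left[of Y\<^sub>1 Y\<^sub>2 X E] cross_edges_commute[of E] by metis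

lemma cross_edges_induced:
  assumes "X \<subseteq> U" "Y \<subseteq> U"
  shows "cross_edges (induced E U) X Y = cross_edges E X Y"
proof -
  have "{(u, v). u \<in> X \<and> v \<in> Y \<and> induced E U u v} = {(u, v). u \<in> X \<and> v \<in> Y \<and> E u v}"
    using assms unfolding induced_def by auto
  then show ?thesis unfolding cross_edges_def by simp
qed

lemma card_mult_card_le_cross_edges:
  assumes "finite X" "finite Y" "S \<subseteq> X" "T \<subseteq> Y" "\<forall>s\<in>S. \<forall>t\<in>T. E s t"
  shows "card S * card T \<le> cross_edges E X Y"
proof -
  have "S \<times> T \<subseteq> {(u, v). u \<in> X \<and> v \<in> Y \<and> E u v}" using assms by auto
  moreover have "finite {(u, v). u \<in> X \<and> v \<in> Y \<and> E u v}"
    by (rule finite_subset[of _ "X \<times> Y"]) (use assms in auto)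
  ultimately show ?thesis
    unfolding cross_edges_def by (metis card_cartesian_product card_mono)
qed

lemma non_neighbours_adjacent:
  assumes "simple_graph V E" "indep_number_le V E 2"
    and "x \<in> V" "y \<in> V" "z \<in> V" "x \<noteq> y" "x \<noteq> z" "y \<noteq> z" "\<not> E x y" "\<not> E x z"
  shows "E y z"
proof (rule ccontr)
  assume "\<not> E y z"
  with assms have "independent_set V E {x, y, z}"
    unfolding independent_set_def simple_graph_def by auto
  then have "card {x, y, z} \<le> 2" using assms(2) unfolding indep_number_le_def by blast
  then show False using assms by simp
qed

lemma cross_edges_ge_non_neighbours:
  assumes "simple_graph V E" "indep_number_le V E 2"
    and "x \<in> V" "X \<subseteq> V" "Y \<subseteq> V" "x \<notin> X" "x \<notin> Y" "X \<inter> Y = {}"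
  shows "card {y \<in> X. \<not> E x y} * card {y \<in> Y. \<not> E x y} \<le> cross_edges E X Y"
proof (rule card_mult_card_le_cross_edges)
  show "finite X" "finite Y"
    using assms finite_subset unfolding simple_graph_def by blast+
  show "\<forall>s\<in>{y \<in> X. \<not> E x y}. \<forall>t\<in>{y \<in> Y. \<not> E x y}. E s t"
    using assms non_neighbours_adjacent[OF assms(1,2,3)] by blast
qed auto

lemma cross_edges_ge_of_sparse_vertex:
  fixes \<epsilon> :: real
  assumes "simple_graph V E" "indep_number_le V E 2"
    and "x \<in> V" "X \<subseteq> V" "Y \<subseteq> V" "x \<notin> X" "x \<notin> Y" "X \<inter> Y = {}" "\<epsilon> \<le> 1"
    and "real (degree X E x) \<le> \<epsilon> * card X" "real (degree Y E x) \<le> \<epsilon> * card Y"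
  shows "(1 - \<epsilon>)\<^sup>2 * card X * card Y \<le> cross_edges E X Y"
proof -
  have "finite X" "finite Y"
    using assms finite_subset unfolding simple_graph_def by blast+
  then have "(1 - \<epsilon>) * card X \<le> card {y \<in> X. \<not> E x y}"
    "(1 - \<epsilon>) * card Y \<le> card {y \<in> Y. \<not> E x y}"
    using assms(10,11) by (simp_all add: card_non_neighbours degree_le_card of_nat_diff algebra_simps)
  then have "((1 - \<epsilon>) * card X) * ((1 - \<epsilon>) * card Y)
      \<le> real (card {y \<in> X. \<not> E x y} * card {y \<in> Y. \<not> E x y})"
    unfolding of_nat_mult using assms(9) by (intro mult_mono) auto
  also have "\<dots> \<le> cross_edges E X Y"
    using cross_edges_ge_non_neighbours[OF assms(1-8)] by linarith
  finally show ?thesis by (simp add: power2_eq_square algebra_simps)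
qed

lemma exists_vertex_sparse_to_both:
  fixes \<mu> :: real
  assumes "finite A" "finite B" "finite U" "B \<noteq> {}" "U \<noteq> {}"
    and "cross_edges E A B < \<mu> * card A * card B" "cross_edges E A U < \<mu> * card A * card U"
  obtains x where "x \<in> A" "degree B E x < 2 * \<mu> * card B" "degree U E x < 2 * \<mu> * card U"
proof -
  have pos: "real (card B) > 0" "real (card U) > 0" using assms by auto
  have "\<exists>x\<in>A. degree B E x / card B + degree U E x / card U < 2 * \<mu>"
  proof (rule ccontr)
    assume "\<not> ?thesis"
    then have "(\<Sum>x\<in>A. 2 * \<mu>) \<le> (\<Sum>x\<in>A. degree B E x / card B + degree U E x / card U)"
      by (intro sum_mono) auto
    also have "\<dots> = cross_edges E A B / card B + cross_edges E A U / card U"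
      using assms(1-3)
      by (simp add: sum.distrib cross_edges_eq_sum_degree sum_divide_distrib)
    also have "\<dots> < \<mu> * card A + \<mu> * card A"
      using assms(6,7) pos by (intro add_strict_mono) (simp_all add: divide_less_eq)
    finally show False by simp
  qed
  then obtain x where "x \<in> A" and x: "degree B E x / card B + degree U E x / card U < 2 * \<mu>"
    by blast
  moreover have "0 \<le> degree B E x / card B" "0 \<le> degree U E x / card U" by simp_all
  then have "degree B E x / card B < 2 * \<mu>" "degree U E x / card U < 2 * \<mu>"
    using x by linarith+
  ultimately show thesis using that pos by (simp add: divide_less_eq)
qed

lemma mu_separation_commute:
  assumes "\<forall>u v. E u v \<longrightarrow> E v u" "mu_separation \<mu> V E U\<^sub>1 U\<^sub>2"
  shows "mu_separation \<mu> V E U\<^sub>2 U\<^sub>1"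
  using assms cross_edges_commute[of E U\<^sub>1 U\<^sub>2] unfolding mu_separation_def
  by (auto simp: Un_commute Int_commute mult.commute mult.left_commute)

lemma mu_separation_card_gt:
  fixes \<mu> :: real
  assumes "simple_graph V E" "card V = n" "\<mu> > 0"
    and "\<forall>v\<in>V. 7 * \<mu> * n \<le> degree V E v"
    and "mu_separation \<mu> V E U\<^sub>1 U\<^sub>2"
  shows "card U\<^sub>1 > 6 * \<mu> * n"
proof -
  have "finite V" using assms(1) unfolding simple_graph_def by auto
  have sep: "U\<^sub>1 \<noteq> {}" "U\<^sub>1 \<union> U\<^sub>2 = V" "U\<^sub>1 \<inter> U\<^sub>2 = {}"
    "cross_edges E U\<^sub>1 U\<^sub>2 < \<mu> * card U\<^sub>1 * card U\<^sub>2"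
    using assms(5) unfolding mu_separation_def by auto
  have fin: "finite U\<^sub>1" "finite U\<^sub>2" using \<open>finite V\<close> sep by auto
  have "7 * \<mu> * n - card U\<^sub>1 \<le> degree U\<^sub>2 E u" if "u \<in> U\<^sub>1" for u
    using assms(4) that sep degree_Un_disjoint[OF fin sep(3), of E u] degree_le_card[OF fin(1), of E u]
    by force
  then have "card U\<^sub>1 * (7 * \<mu> * n - card U\<^sub>1) \<le> cross_edges E U\<^sub>1 U\<^sub>2"
    using sum_mono[of U\<^sub>1 "\<lambda>_. 7 * \<mu> * n - card U\<^sub>1" "\<lambda>u. real (degree U\<^sub>2 E u)"]
    by (simp add: cross_edges_eq_sum_degree[OF fin])
  also have "\<dots> < \<mu> * card U\<^sub>1 * card U\<^sub>2" by (fact sep(4))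
  also have "\<dots> \<le> card U\<^sub>1 * (\<mu> * n)"
  proof -
    have "card U\<^sub>2 \<le> n" using assms(2) \<open>finite V\<close> sep(2) card_mono[of V U\<^sub>2] by auto
    then show ?thesis using assms(3) by (simp add: mult_left_mono)
  qed
  finally have "7 * \<mu> * n - card U\<^sub>1 < \<mu> * n"
    using fin sep(1) by (simp add: mult_less_cancel_left)
  then show ?thesis by linarith
qed

definition minimal_mu_separation ::
    "real \<Rightarrow> 'a set \<Rightarrow> ('a \<Rightarrow> 'a \<Rightarrow> bool) \<Rightarrow> 'a set \<Rightarrow> 'a set \<Rightarrow> bool" where
  "minimal_mu_separation \<mu> V E U\<^sub>1 U\<^sub>2 \<longleftrightarrow> mu_separation \<mu> V E U\<^sub>1 U\<^sub>2 \<and>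
     (\<forall>W\<^sub>1 W\<^sub>2. mu_separation \<mu> V E W\<^sub>1 W\<^sub>2 \<longrightarrow> cross_edges E U\<^sub>1 U\<^sub>2 \<le> cross_edges E W\<^sub>1 W\<^sub>2)"

lemma minimal_mu_separation_exists:
  assumes "\<not> mu_inseparable \<mu> V E"
  obtains U\<^sub>1 U\<^sub>2 where "minimal_mu_separation \<mu> V E U\<^sub>1 U\<^sub>2"
proof -
  let ?sep = "\<lambda>p. mu_separation \<mu> V E (fst p) (snd p)"
  have "\<exists>p. ?sep p" using assms unfolding mu_inseparable_def by auto
  then obtain p where "?sep p" "\<forall>q. ?sep q \<longrightarrow> cross_edges E (fst p) (snd p) \<le> cross_edges E (fst q) (snd q)"
    using ex_has_least_nat[of ?sep _ "\<lambda>p. cross_edges E (fst p) (snd p)"] by blast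
  then have "minimal_mu_separation \<mu> V E (fst p) (snd p)"
    unfolding minimal_mu_separation_def by (metis fst_conv snd_conv)
  then show thesis by (fact that)
qed

lemma minimal_mu_separation_commute:
  assumes "\<forall>u v. E u v \<longrightarrow> E v u" "minimal_mu_separation \<mu> V E U\<^sub>1 U\<^sub>2"
  shows "minimal_mu_separation \<mu> V E U\<^sub>2 U\<^sub>1"
  using assms mu_separation_commute[OF assms(1)] cross_edges_commute[OF assms(1), of U\<^sub>1 U\<^sub>2]
  unfolding minimal_mu_separation_def by metis

lemma mu_separation_move_part:
  fixes \<mu> :: real
  assumes "\<forall>u v. E u v \<longrightarrow> E v u" "mu_separation \<mu> V E (A \<union> B) U" "A \<inter> B = {}" "A \<noteq> {}"
    and "cross_edges E A B < \<mu> * card A * card B" "cross_edges E A U < \<mu> * card A * card U"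
  shows "mu_separation \<mu> V E A (B \<union> U)"
proof -
  have sep: "U \<noteq> {}" "A \<union> B \<union> U = V" "(A \<union> B) \<inter> U = {}" "finite (A \<union> B)" "finite U"
    using assms(2) unfolding mu_separation_def by (auto simp: card_ge_0_finite)
  then have "B \<inter> U = {}" "finite A" "finite B" by auto
  then have "cross_edges E A (B \<union> U) = cross_edges E A B + cross_edges E A U"
    "card (B \<union> U) = card B + card U"
    using cross_edges_Un_right[OF assms(1)] sep(5) by (auto simp: card_Un_disjoint)
  then show ?thesis
    using assms(3-6) sep(1-3) unfolding mu_separation_def by (auto simp: algebra_simps)
qed

lemma minimal_mu_separation_no_sparse_part:
  fixes \<mu> :: real
  assumes g: "simple_graph V E" and ind: "indep_number_le V E 2" and n: "card V = n"
    and \<mu>: "0 < \<mu>" "\<mu> < 1/7" and deg: "\<forall>v\<in>V. 7 * \<mu> * n \<le> degree V E v"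
    and min: "minimal_mu_separation \<mu> V E (A \<union> B) U"
    and AB: "A \<inter> B = {}" "A \<noteq> {}" "B \<noteq> {}"
    and sparse: "cross_edges E A B < \<mu> * card A * card B" "cross_edges E A U < \<mu> * card A * card U"
  shows False
proof -
  have sym: "\<forall>u v. E u v \<longrightarrow> E v u" and "finite V"
    using g unfolding simple_graph_def by auto
  have sep: "mu_separation \<mu> V E (A \<union> B) U"
    using min unfolding minimal_mu_separation_def by simp
  then have V: "A \<union> B \<union> U = V" "(A \<union> B) \<inter> U = {}" "U \<noteq> {}"
    unfolding mu_separation_def by auto
  then have fin: "finite A" "finite B" "finite U" using \<open>finite V\<close> by auto
  have U_large: "card U > 6 * \<mu> * n"
    using mu_separation_card_gt[OF g n \<mu>(1) deg mu_separation_commute[OF sym sep]] .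
  have "mu_separation \<mu> V E A (B \<union> U)"
    using mu_separation_move_part[OF sym sep AB(1,2) sparse] .
  then have "cross_edges E (A \<union> B) U \<le> cross_edges E A (B \<union> U)"
    using min unfolding minimal_mu_separation_def by blast
  then have BU_le_AB: "cross_edges E B U \<le> cross_edges E A B"
    using V(2) cross_edges_Un_left[OF fin AB(1)] cross_edges_Un_right[OF sym fin(1,2,3)]
    by (simp add: Int_Un_distrib2)
  obtain x where x: "x \<in> A" "degree B E x < 2 * \<mu> * card B" "degree U E x < 2 * \<mu> * card U"
    using exists_vertex_sparse_to_both[OF fin AB(3) V(3) sparse] .
  have "(1 - 2 * \<mu>)\<^sup>2 * card B * card U \<le> cross_edges E B U"
    using x V AB \<mu> by (intro cross_edges_ge_of_sparse_vertex[OF g ind]) auto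
  also have "\<dots> < \<mu> * card A * card B"
    using BU_le_AB sparse(1) by linarith
  also have "\<dots> \<le> \<mu> * n * card B"
  proof -
    have "card A \<le> n" using card_mono[OF \<open>finite V\<close>, of A] V(1) n by auto
    then show ?thesis using \<mu>(1) by (intro mult_right_mono) auto
  qed
  finally have "card B * ((1 - 2 * \<mu>)\<^sup>2 * card U) < card B * (\<mu> * n)"
    by (simp add: mult_ac)
  then have "(1 - 2 * \<mu>)\<^sup>2 * card U < \<mu> * n"
    by (rule mult_left_less_imp_less) simp
  moreover have "25/49 \<le> (1 - 2 * \<mu>)\<^sup>2"
    using power_mono[of "5/7" "1 - 2 * \<mu>" 2] \<mu> by (simp add: power2_eq_square)
  then have "25/49 * card U \<le> (1 - 2 * \<mu>)\<^sup>2 * card U"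
    by (intro mult_right_mono) simp_all
  moreover have "0 \<le> \<mu> * n" using \<mu>(1) by simp
  ultimately show False using U_large by linarith
qed

lemma minimal_mu_separation_inseparable_part:
  fixes \<mu> :: real
  assumes g: "simple_graph V E" and ind: "indep_number_le V E 2" and n: "card V = n"
    and \<mu>: "0 < \<mu>" "\<mu> < 1/7" and deg: "\<forall>v\<in>V. 7 * \<mu> * n \<le> degree V E v"
    and min: "minimal_mu_separation \<mu> V E U\<^sub>1 U\<^sub>2"
  shows "mu_inseparable \<mu> U\<^sub>1 (induced E U\<^sub>1)"
  unfolding mu_inseparable_def
proof
  assume "\<exists>A B. mu_separation \<mu> U\<^sub>1 (induced E U\<^sub>1) A B"
  then obtain A B where AB: "A \<noteq> {}" "B \<noteq> {}" "A \<union> B = U\<^sub>1" "A \<inter> B = {}"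
    and "cross_edges (induced E U\<^sub>1) A B < \<mu> * card A * card B"
    unfolding mu_separation_def by blast
  then have sparse_AB: "cross_edges E A B < \<mu> * card A * card B"
    using cross_edges_induced[of A U\<^sub>1 B E] by auto
  have sym: "\<forall>u v. E u v \<longrightarrow> E v u" and "finite V"
    using g unfolding simple_graph_def by auto
  have sep: "U\<^sub>1 \<union> U\<^sub>2 = V" "cross_edges E U\<^sub>1 U\<^sub>2 < \<mu> * card U\<^sub>1 * card U\<^sub>2"
    using min unfolding minimal_mu_separation_def mu_separation_def by auto
  then have fin: "finite A" "finite B" "finite U\<^sub>2" using AB \<open>finite V\<close> by auto
  have "cross_edges E A U\<^sub>2 + cross_edges E B U\<^sub>2 < \<mu> * card A * card U\<^sub>2 + \<mu> * card B * card U\<^sub>2"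
    using sep(2) AB(3,4) cross_edges_Un_left[OF fin AB(4)] card_Un_disjoint[OF fin(1,2) AB(4)]
    by (simp add: algebra_simps)
  then consider "cross_edges E A U\<^sub>2 < \<mu> * card A * card U\<^sub>2"
    | "cross_edges E B U\<^sub>2 < \<mu> * card B * card U\<^sub>2" by linarith
  then show False
  proof cases
    case 1
    then show False
      using minimal_mu_separation_no_sparse_part[OF g ind n \<mu> deg _ AB(4,1,2) sparse_AB] min AB(3)
      by blast
  next
    case 2
    have "cross_edges E B A < \<mu> * card B * card A"
      using sparse_AB cross_edges_commute[OF sym, of A B] by (simp add: mult_ac)
    then show False
      using minimal_mu_separation_no_sparse_part[OF g ind n \<mu> deg _ _ AB(2,1) _ 2] min AB(3,4)
      by (simp add: Un_commute Int_commute)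
  qed
qed

theorem lemma7p3:
  fixes \<mu> :: real
  assumes "\<mu> > 0"
  shows "\<exists>n0::nat. \<forall>n\<ge>n0. \<forall>(V::nat set) E.
    simple_graph V E \<and> card V = n \<and>
    (\<forall>v\<in>V. real (degree V E v) \<ge> 7 * \<mu> * real n) \<and>
    indep_number_le V E 2 \<longrightarrow>
      mu_inseparable \<mu> V E \<or>
      (\<exists>U1 U2. mu_separation \<mu> V E U1 U2 \<and>
         mu_inseparable \<mu> U1 (induced E U1) \<and> mu_inseparable \<mu> U2 (induced E U2))"
proof (intro exI[of _ 0] allI impI)
  fix n :: nat and V :: "nat set" and E
  assume "simple_graph V E \<and> card V = n \<and>
    (\<forall>v\<in>V. real (degree V E v) \<ge> 7 * \<mu> * real n) \<and> indep_number_le V E 2"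
  then have g: "simple_graph V E" and n: "card V = n" and ind: "indep_number_le V E 2"
    and deg: "\<forall>v\<in>V. 7 * \<mu> * n \<le> degree V E v"
    by auto
  show "mu_inseparable \<mu> V E \<or>
      (\<exists>U1 U2. mu_separation \<mu> V E U1 U2 \<and>
         mu_inseparable \<mu> U1 (induced E U1) \<and> mu_inseparable \<mu> U2 (induced E U2))"
  proof (cases "mu_inseparable \<mu> V E")
    case False
    then obtain U\<^sub>1 U\<^sub>2 where min: "minimal_mu_separation \<mu> V E U\<^sub>1 U\<^sub>2"
      by (rule minimal_mu_separation_exists)
    then have "V \<noteq> {}"
      unfolding minimal_mu_separation_def mu_separation_def by blast
    then have "7 * \<mu> < 1"
      using min_degree_fraction_lt_1[OF g, of "7 * \<mu>"] deg n by (simp add: mult.assoc)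
    then have \<mu>: "0 < \<mu>" "\<mu> < 1/7" using assms by simp_all
    have sym: "\<forall>u v. E u v \<longrightarrow> E v u" using g unfolding simple_graph_def by simp
    show ?thesis
      using min minimal_mu_separation_commute[OF sym min]
        minimal_mu_separation_inseparable_part[OF g ind n \<mu> deg]
      unfolding minimal_mu_separation_def by blast
  qed simp
qed

end
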